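(* Let $\{\mathbf{x}_i\}_{i=1}^N\subset\mathbb{R}^{D_x}$ and $\{\mathbf{y}_i\}_{i=1}^N\subset\mathbb{R}^{D_y}$ be zero-mean data, $\mathbf{X}=[\mathbf{x}_1\,\cdots\,\mathbf{x}_N]$, $\mathbf{Y}=[\mathbf{y}_1\,\cdots\,\mathbf{y}_N]$, $\boldsymbol{\Sigma}_x=\frac1N\sum_i\mathbf{x}_i\mathbf{x}_i^\top$, $\boldsymbol{\Sigma}_y=\frac1N\sum_i\mathbf{y}_i\mathbf{y}_i^\top$, $\boldsymbol{\Sigma}_{xy}=\frac1N\sum_i\mathbf{x}_i\mathbf{y}_i^\top$. Let $\mathbf{W}=(w_{ij})\in\mathbb{R}^{N\times N}$ be a symmetric matrix with nonnegative entries, $d_i=\sum_{j=1}^N w_{ij}$, $d_{\max}=\max_i d_i$, $\mathbf{D}=\mathrm{diag}(d_1,\dots,d_N)$, $\mathbf{L}_{\mathcal{G}}=\mathbf{D}-\mathbf{W}$, and let $\gamma\ge 0$. Define $$f(\mathbf{u},\mathbf{v})=\mathbf{u}^\top\boldsymbol{\Sigma}_{xy}\mathbf{v}-\gamma\mathbf{u}^\top\mathbf{X}\mathbf{L}_{\mathcal{G}}\mathbf{Y}^\top\mathbf{v}-\frac{\gamma}{2}\sum_{i=1}^N d_i(\mathbf{u}^\top\mathbf{x}_i-\mathbf{v}^\top\mathbf{y}_i)^2,$$ and let $g(\mathbf{u},\mathbf{v})$ be obtained from $f$ by replacing $\sum_{i=1}^N d_i(\mathbf{u}^\top\mathbf{x}_i-\mathbf{v}^\top\mathbf{y}_i)^2$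 with $2d_{\max}N(\mathbf{u}^\top\boldsymbol{\Sigma}_x\mathbf{u}+\mathbf{v}^\top\boldsymbol{\Sigma}_y\mathbf{v})$. Then $g(\mathbf{u},\mathbf{v})\le f(\mathbf{u},\mathbf{v})$ for all $\mathbf{u}\in\mathbb{R}^{D_x},\mathbf{v}\in\mathbb{R}^{D_y}$, and on the set $\{\mathbf{u}^\top\boldsymbol{\Sigma}_x\mathbf{u}=1,\ \mathbf{v}^\top\boldsymbol{\Sigma}_y\mathbf{v}=1\}$, $g$ differs from $\mathbf{u}^\top\boldsymbol{\Sigma}_{xy}\mathbf{v}-\gamma\mathbf{u}^\top\mathbf{X}\mathbf{L}_{\mathcal{G}}\mathbf{Y}^\top\mathbf{v}$ only by a constant; hence maximizing $g$ subject to these constraints is equivalent to the problem $$\max_{\mathbf{u},\mathbf{v}}\ \mathbf{u}^\top\boldsymbol{\Sigma}_{xy}\mathbf{v}-\gamma\mathbf{u}^\top\mathbf{X}\mathbf{L}_{\mathcal{G}}\mathbf{Y}^\top\mathbf{v}\quad\text{s.t.}\quad \mathbf{u}^\top\boldsymbol{\Sigma}_x\mathbf{u}=1,\ \mathbf{v}^\top\boldsymbol{\Sigma}_y\mathbf{v}=1.$$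
   Context: $\mathbf{W}$ is the weighted adjacency matrix of an undirected graph $\mathcal{G}$ on $N$ nodes (the common-source graph), and $\mathbf{L}_{\mathcal{G}}$ is its Laplacian. The last displayed problem is called graph CCA (gCCA). *)

theory Defs
  imports "HOL-Analysis.Analysis"
begin

text \<open>Data points are indexed by a finite type 'n (so N = CARD('n)); feature
spaces are real^'dx and real^'dy.\<close>

definition outer :: "real ^ 'a \<Rightarrow> real ^ 'b \<Rightarrow> real ^ 'b ^ 'a" where
  "outer a b = (\<chi> i j. a $ i * b $ j)"

definition covmat :: "('n::finite \<Rightarrow> real ^ 'a) \<Rightarrow> ('n \<Rightarrow> real ^ 'b) \<Rightarrow> real ^ 'b ^ 'a" where
  "covmat x y = (1 / real CARD('n)) *\<^sub>R (\<Sum>i\<in>UNIV. outer (x i) (y i))"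

definition datamat :: "('n::finite \<Rightarrow> real ^ 'a) \<Rightarrow> real ^ 'n ^ 'a" where
  "datamat x = (\<chi> k i. x i $ k)"

definition degree :: "real ^ 'n ^ 'n \<Rightarrow> 'n::finite \<Rightarrow> real" where
  "degree W i = (\<Sum>j\<in>UNIV. W $ i $ j)"

definition dmax :: "real ^ 'n ^ 'n \<Rightarrow> real" where
  "dmax W = Max (range (degree (W :: real ^ 'n::finite ^ 'n)))"

definition laplacian :: "real ^ 'n ^ 'n \<Rightarrow> real ^ 'n ^ 'n" where
  "laplacian W = (\<chi> i j. (if i = j then degree (W :: real ^ 'n::finite ^ 'n) i else 0) - W $ i $ j)"

definition gcca_obj where
  "gcca_obj x y W \<gamma> u v =
     u \<bullet> (covmat x y *v v) - \<gamma> * (u \<bullet> ((datamat x ** laplacian W ** transpose (datamat y)) *v v))"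

definition f_obj where
  "f_obj x y W \<gamma> u v = gcca_obj x y W \<gamma> u v
     - \<gamma> / 2 * (\<Sum>i\<in>UNIV. degree W i * (u \<bullet> x i - v \<bullet> y i)^2)"

definition g_obj where
  "g_obj x y W \<gamma> u v = gcca_obj x y W \<gamma> u v
     - \<gamma> / 2 * (2 * dmax W * real CARD('n) *
         (u \<bullet> (covmat x x *v u) + v \<bullet> (covmat y y *v v)))"
  for x :: "'n::finite \<Rightarrow> real ^ 'a"

end

theory Submission
  imports Defs
begin

text \<open>Since (a - b)^2 \<le> 2 (a^2 + b^2) and every degree is at most the maximal degree,
  the degree-weighted penalty of f is dominated by the covariance penalty of g, whence g
  is a lower bound for f. On the constraint set the covariance penalty of g is the constant
  4 d_max N, so g and the gCCA objective differ by a constant there and share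
  their constrained maximisers.\<close>

lemma outer_mult_vec: "outer a b *v v = (b \<bullet> v) *\<^sub>R a"
  by (simp add: outer_def vec_eq_iff matrix_vector_mult_def inner_vec_def sum_distrib_left
      mult.commute mult.left_commute)

lemma sum_matrix_vector_mult:
  "(\<Sum>i\<in>S. (A i :: real ^ 'b ^ 'a)) *v v = (\<Sum>i\<in>S. A i *v v)"
  by (induction S rule: infinite_finite_induct) (auto simp: matrix_vector_mult_add_rdistrib)

lemma scaleR_matrix_vector_mult: "(c *\<^sub>R (A :: real ^ 'b ^ 'a)) *v v = c *\<^sub>R (A *v v)"
  by (simp add: vec_eq_iff matrix_vector_mult_def sum_distrib_left mult.assoc)

lemma covmat_quadratic_form:
  fixes x :: "'n::finite \<Rightarrow> real ^ 'a"
  shows "u \<bullet> (covmat x x *v u) = (\<Sum>i\<in>UNIV. (u \<bullet> x i)\<^sup>2) / real CARD('n)"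
  by (simp add: covmat_def scaleR_matrix_vector_mult sum_matrix_vector_mult outer_mult_vec
      inner_sum_right power2_eq_square inner_commute)

lemma degree_nonneg: "(\<forall>i j. W $ i $ j \<ge> 0) \<Longrightarrow> degree W i \<ge> 0"
  unfolding degree_def by (simp add: sum_nonneg)

lemma degree_le_dmax: "degree W i \<le> dmax W"
  unfolding dmax_def by (rule Max_ge) auto

lemma square_diff_le: "(a - b)\<^sup>2 \<le> 2 * (a\<^sup>2 + (b :: real)\<^sup>2)"
proof -
  have "0 \<le> (a + b)\<^sup>2" by simp
  then show ?thesis by (simp add: power2_diff power2_sum)
qed

lemma weighted_square_diff_le:
  fixes d a b :: "'i \<Rightarrow> real"
  assumes "\<And>i. i \<in> S \<Longrightarrow> 0 \<le> d i" and "\<And>i. i \<in> S \<Longrightarrow> d i \<le> M"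
  shows "(\<Sum>i\<in>S. d i * (a i - b i)\<^sup>2) \<le> 2 * M * (\<Sum>i\<in>S. (a i)\<^sup>2 + (b i)\<^sup>2)"
proof -
  have "d i * (a i - b i)\<^sup>2 \<le> 2 * M * ((a i)\<^sup>2 + (b i)\<^sup>2)" if "i \<in> S" for i
  proof -
    have "d i * (a i - b i)\<^sup>2 \<le> M * (a i - b i)\<^sup>2"
      using assms(2)[OF that] by (simp add: mult_right_mono)
    also have "\<dots> \<le> M * (2 * ((a i)\<^sup>2 + (b i)\<^sup>2))"
      using assms[OF that] square_diff_le by (simp add: mult_left_mono)
    finally show ?thesis by (simp add: algebra_simps)
  qed
  then show ?thesis
    by (simp add: sum_mono sum_distrib_left)
qed

lemma degree_penalty_le_covariance_penalty:
  fixes x :: "'n::finite \<Rightarrow> real ^ 'dx" and y :: "'n \<Rightarrow> real ^ 'dy"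
  assumes "\<forall>i j. W $ i $ j \<ge> 0"
  shows "(\<Sum>i\<in>UNIV. degree W i * (u \<bullet> x i - v \<bullet> y i)\<^sup>2)
    \<le> 2 * dmax W * real CARD('n) * (u \<bullet> (covmat x x *v u) + v \<bullet> (covmat y y *v v))"
proof -
  have "(\<Sum>i\<in>UNIV. degree W i * (u \<bullet> x i - v \<bullet> y i)\<^sup>2)
      \<le> 2 * dmax W * (\<Sum>i\<in>UNIV. (u \<bullet> x i)\<^sup>2 + (v \<bullet> y i)\<^sup>2)"
    by (rule weighted_square_diff_le) (use assms degree_nonneg degree_le_dmax in auto)
  also have "\<dots> = 2 * dmax W * real CARD('n) * (u \<bullet> (covmat x x *v u) + v \<bullet> (covmat y y *v v))"
    by (simp add: covmat_quadratic_form sum.distrib field_simps)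
  finally show ?thesis .
qed

lemma g_obj_le_f_obj:
  fixes x :: "'n::finite \<Rightarrow> real ^ 'dx" and y :: "'n \<Rightarrow> real ^ 'dy"
  assumes "\<forall>i j. W $ i $ j \<ge> 0" and "\<gamma> \<ge> 0"
  shows "g_obj x y W \<gamma> u v \<le> f_obj x y W \<gamma> u v"
  unfolding g_obj_def f_obj_def
  using mult_left_mono[OF degree_penalty_le_covariance_penalty[OF assms(1), of u x v y],
      of "\<gamma> / 2"] assms(2)
  by (simp add: mult_ac)

lemma g_obj_on_unit_variances:
  fixes x :: "'n::finite \<Rightarrow> real ^ 'dx" and y :: "'n \<Rightarrow> real ^ 'dy"
  assumes "u \<bullet> (covmat x x *v u) = 1" and "v \<bullet> (covmat y y *v v) = 1"
  shows "g_obj x y W \<gamma> u v = gcca_obj x y W \<gamma> u v - 2 * \<gamma> * dmax W * real CARD('n)"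
  using assms by (simp add: g_obj_def)

lemma is_max_on_add_const_iff:
  assumes "\<And>z. z \<in> S \<Longrightarrow> g z = h z + c" and "z \<in> S"
  shows "(\<forall>z'\<in>S. g z' \<le> g z) \<longleftrightarrow> (\<forall>z'\<in>S. h z' \<le> (h z :: real))"
  using assms by auto

theorem proposition1:
  fixes x :: "'n::finite \<Rightarrow> real ^ 'dx" and y :: "'n \<Rightarrow> real ^ 'dy"
    and W :: "real ^ 'n ^ 'n" and \<gamma> :: real
  assumes xmean: "(\<Sum>i\<in>UNIV. x i) = 0" and ymean: "(\<Sum>i\<in>UNIV. y i) = 0"
    and Wsym: "transpose W = W" and Wnonneg: "\<forall>i j. W $ i $ j \<ge> 0"
    and gamma: "\<gamma> \<ge> 0"
  shows "(\<forall>u v. g_obj x y W \<gamma> u v \<le> f_obj x y W \<gamma> u v)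
    \<and> (\<exists>c. \<forall>u v. u \<bullet> (covmat x x *v u) = 1 \<and> v \<bullet> (covmat y y *v v) = 1 \<longrightarrow>
            g_obj x y W \<gamma> u v = gcca_obj x y W \<gamma> u v + c)
    \<and> (\<forall>u v. u \<bullet> (covmat x x *v u) = 1 \<and> v \<bullet> (covmat y y *v v) = 1 \<longrightarrow>
         ((\<forall>u' v'. u' \<bullet> (covmat x x *v u') = 1 \<and> v' \<bullet> (covmat y y *v v') = 1 \<longrightarrow>
              g_obj x y W \<gamma> u' v' \<le> g_obj x y W \<gamma> u v)
          \<longleftrightarrow>
          (\<forall>u' v'. u' \<bullet> (covmat x x *v u') = 1 \<and> v' \<bullet> (covmat y y *v v') = 1 \<longrightarrow>
              gcca_obj x y W \<gamma> u' v' \<le> gcca_obj x y W \<gamma> u v)))"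
proof -
  let ?c = "- (2 * \<gamma> * dmax W * real CARD('n))"
  let ?S = "{(u, v). u \<bullet> (covmat x x *v u) = 1 \<and> v \<bullet> (covmat y y *v v) = 1}"
  have shift: "\<forall>u v. u \<bullet> (covmat x x *v u) = 1 \<and> v \<bullet> (covmat y y *v v) = 1 \<longrightarrow>
      g_obj x y W \<gamma> u v = gcca_obj x y W \<gamma> u v + ?c"
    using g_obj_on_unit_variances by auto
  have argmax: "(\<forall>z'\<in>?S. case_prod (g_obj x y W \<gamma>) z' \<le> case_prod (g_obj x y W \<gamma>) z)
      \<longleftrightarrow> (\<forall>z'\<in>?S. case_prod (gcca_obj x y W \<gamma>) z' \<le> case_prod (gcca_obj x y W \<gamma>) z)"
    if "z \<in> ?S" for z
    by (rule is_max_on_add_const_iff[OF _ that]) (use shift in auto)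
  show ?thesis
    using g_obj_le_f_obj[OF Wnonneg gamma] shift argmax by fastforce
qed

end
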